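(* Let $D:\mathcal{A}^W\to\mathcal{A}^W$ be a linear operator that is triangular, i.e. $D(\mathcal{A}^W_\lambda)\subseteq\mathcal{A}^W_\lambda$ for every $\lambda\in\mathcal{P}^+$. Let $\{s_\lambda\}_{\lambda\in\mathcal{P}^+}$ be a basis of $\mathcal{A}^W$ such that, for all $\lambda\in\mathcal{P}^+$, $$m_\lambda=\sum_{\mu\in\mathcal{P}^+,\ \mu\preceq\lambda}a_{\lambda\mu}\,s_\mu,\quad a_{\lambda\lambda}=1,\qquad D\,m_\lambda=\sum_{\mu\in\mathcal{P}^+,\ \mu\preceq\lambda}b_{\lambda\mu}\,s_\mu,\quad b_{\lambda\lambda}=\epsilon_\lambda .$$ Assume $D$ is regular: $\epsilon_\mu\neq\epsilon_\lambda$ whenever $\mu,\lambda\in\mathcal{P}^+$ with $\mu\prec\lambda$. Fix $\lambda\in\mathcal{P}^+$ and let $\lambda^{(1)},\lambda^{(2)},\dots,\lambda^{(n)}=\lambda$ be any enumeration of the finite set $\{\mu\in\mathcal{P}^+\mid\mu\preceq\lambda\}$ that refines the partial order (i.e. $\lambda^{(i)}\prec\lambda^{(j)}$ implies $i<j$). Set $\mathcal{E}_\lambda=\prod_{\mu\in\mathcal{P}^+,\ \mu\prec\lambda}(\epsilon_\lambda-\epsilon_\mu)$ and, for $n\ge j>k\ge1$, $d_{\lambda^{(j)}\lambda^{(k)}}=b_{\lambda^{(j)}\lambda^{(k)}}-\epsilon_\lambda\,a_{\lambda^{(j)}\lambda^{(k)}}$. Let $M$ be the $n\times n$ (lower Hessenberg)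 matrix whose first column is $(m_{\lambda^{(1)}},\dots,m_{\lambda^{(n)}})^T$ and whose $(k+1)$-st column, for $k=1,\dots,n-1$, has entry in row $j$ equal to $0$ if $j<k$, equal to $\epsilon_{\lambda^{(k)}}-\epsilon_{\lambda}$ if $j=k$, and equal to $d_{\lambda^{(j)}\lambda^{(k)}}$ if $j>k$. Then $p_\lambda:=\mathcal{E}_\lambda^{-1}\det M$ satisfies $D p_\lambda=\epsilon_\lambda p_\lambda$ and $p_\lambda=m_\lambda+\sum_{\mu\in\mathcal{P}^+,\ \mu\prec\lambda}c_{\lambda\mu}m_\mu$ for some coefficients $c_{\lambda\mu}$; i.e. $\{p_\lambda\}_{\lambda\in\mathcal{P}^+}$ is the monic basis of $\mathcal{A}^W$ diagonalizing $D$.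
   Context: $E$ is a real Euclidean space with inner product $\langle\cdot,\cdot\rangle$ spanned by an irreducible root system $R$ with Weyl group $W$ and positive roots $R^+$; $\alpha^\vee=2\alpha/\langle\alpha,\alpha\rangle$. $\mathcal{Q}^+=\mathrm{Span}_{\mathbb{N}}(R^+)$; $\mathcal{P}=\{\lambda\in E\mid\langle\lambda,\alpha^\vee\rangle\in\mathbb{Z}\ \forall\alpha\in R\}$ is the weight lattice and $\mathcal{P}^+=\{\lambda\in E\mid\langle\lambda,\alpha^\vee\rangle\in\mathbb{N}\ \forall\alpha\in R^+\}$ the dominant weights; partial order $\lambda\succeq\mu$ iff $\lambda-\mu\in\mathcal{Q}^+$. The group algebra $\mathbb{R}[\mathcal{P}]$ is spanned by formal exponentials $e^\lambda$ ($\lambda\in\mathcal{P}$) with $e^\lambda e^\mu=e^{\lambda+\mu}$, and $\mathcal{A}^W$ is its subspace of $W$-invariant elements, with basis the monomials $m_\lambda=\sum_{\mu\in W(\lambda)}e^\mu$, $\lambda\in\mathcal{P}^+$ ($W(\lambda)$ the $W$-orbit). For $\lambda\in\mathcal{P}^+$, $\mathcal{A}^W_\lambda=\mathrm{Span}\{m_\mu\mid\mu\in\mathcal{P}^+,\ \mu\preceq\lambda\}$. *)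

theory Defs
  imports "HOL-Analysis.Euclidean_Space" "HOL-Library.Poly_Mapping" "Jordan_Normal_Form.Determinant"
begin

definition coroot :: "'a::euclidean_space \<Rightarrow> 'a" where
  "coroot \<alpha> = (2 / (inner \<alpha> \<alpha>)) *\<^sub>R \<alpha>"

definition refl :: "'a::euclidean_space \<Rightarrow> 'a \<Rightarrow> 'a" where
  "refl \<alpha> x = x - (inner x (coroot \<alpha>)) *\<^sub>R \<alpha>"

definition root_system :: "'a::euclidean_space set \<Rightarrow> bool" where
  "root_system R \<longleftrightarrow> finite R \<and> 0 \<notin> R \<and> span R = UNIV \<and>
     (\<forall>\<alpha>\<in>R. refl \<alpha> ` R = R) \<and>
     (\<forall>\<alpha>\<in>R. \<forall>\<beta>\<in>R. inner \<beta> (coroot \<alpha>) \<in> \<int>)"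

definition irreducible_rs :: "'a::euclidean_space set \<Rightarrow> bool" where
  "irreducible_rs R \<longleftrightarrow> \<not> (\<exists>A B. A \<union> B = R \<and> A \<inter> B = {} \<and> A \<noteq> {} \<and> B \<noteq> {} \<and>
       (\<forall>\<alpha>\<in>A. \<forall>\<beta>\<in>B. inner \<alpha> \<beta> = 0))"

definition positive_system :: "'a::euclidean_space set \<Rightarrow> 'a set \<Rightarrow> bool" where
  "positive_system R Rp \<longleftrightarrow> (\<exists>v. (\<forall>\<alpha>\<in>R. inner \<alpha> v \<noteq> 0) \<and> Rp = {\<alpha>\<in>R. inner \<alpha> v > 0})"

inductive_set weyl_group :: "'a::euclidean_space set \<Rightarrow> ('a \<Rightarrow> 'a) set" for R where
  weyl_id: "id \<in> weyl_group R"
| weyl_step: "w \<in> weyl_group R \<Longrightarrow> \<alpha> \<in> R \<Longrightarrow> refl \<alpha> \<circ> w \<in> weyl_group R"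

definition weights :: "'a::euclidean_space set \<Rightarrow> 'a set" where
  "weights R = {lm. \<forall>\<alpha>\<in>R. inner lm (coroot \<alpha>) \<in> \<int>}"

definition dominant :: "'a::euclidean_space set \<Rightarrow> 'a set" where
  "dominant Rp = {lm. \<forall>\<alpha>\<in>Rp. inner lm (coroot \<alpha>) \<in> \<nat>}"

definition Qplus :: "'a::euclidean_space set \<Rightarrow> 'a set" where
  "Qplus Rp = {x. \<exists>n::'a \<Rightarrow> nat. x = (\<Sum>\<alpha>\<in>Rp. real (n \<alpha>) *\<^sub>R \<alpha>)}"

definition dom_le :: "'a::euclidean_space set \<Rightarrow> 'a \<Rightarrow> 'a \<Rightarrow> bool" where
  "dom_le Rp \<mu> lm \<longleftrightarrow> lm - \<mu> \<in> Qplus Rp"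

definition dom_lt :: "'a::euclidean_space set \<Rightarrow> 'a \<Rightarrow> 'a \<Rightarrow> bool" where
  "dom_lt Rp \<mu> lm \<longleftrightarrow> dom_le Rp \<mu> lm \<and> \<mu> \<noteq> lm"

section \<open>Group algebra R[P] (as finitely supported functions, with convolution product)\<close>

definition gexp :: "'a::euclidean_space \<Rightarrow> ('a \<Rightarrow>\<^sub>0 real)" where
  "gexp \<mu> = Poly_Mapping.single \<mu> 1"

definition gcst :: "real \<Rightarrow> ('a::euclidean_space \<Rightarrow>\<^sub>0 real)" where
  "gcst c = Poly_Mapping.single 0 c"

definition scal :: "real \<Rightarrow> ('a::euclidean_space \<Rightarrow>\<^sub>0 real) \<Rightarrow> ('a \<Rightarrow>\<^sub>0 real)" where
  "scal c f = gcst c * f"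

definition worbit :: "'a::euclidean_space set \<Rightarrow> 'a \<Rightarrow> 'a set" where
  "worbit R lm = (\<lambda>w. w lm) ` weyl_group R"

definition monW :: "'a::euclidean_space set \<Rightarrow> 'a \<Rightarrow> ('a \<Rightarrow>\<^sub>0 real)" where
  "monW R lm = (\<Sum>\<mu>\<in>worbit R lm. gexp \<mu>)"

definition AW :: "'a::euclidean_space set \<Rightarrow> ('a \<Rightarrow>\<^sub>0 real) set" where
  "AW R = {f. Poly_Mapping.keys f \<subseteq> weights R \<and>
             (\<forall>w\<in>weyl_group R. \<forall>\<mu>. Poly_Mapping.lookup f (w \<mu>) = Poly_Mapping.lookup f \<mu>)}"

definition below :: "'a::euclidean_space set \<Rightarrow> 'a \<Rightarrow> 'a set" where
  "below Rp lm = {\<mu>\<in>dominant Rp. dom_le Rp \<mu> lm}"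

definition strictly_below :: "'a::euclidean_space set \<Rightarrow> 'a \<Rightarrow> 'a set" where
  "strictly_below Rp lm = {\<mu>\<in>dominant Rp. dom_lt Rp \<mu> lm}"

definition AWl :: "'a::euclidean_space set \<Rightarrow> 'a set \<Rightarrow> 'a \<Rightarrow> ('a \<Rightarrow>\<^sub>0 real) set" where
  "AWl R Rp lm = {f. \<exists>c. f = (\<Sum>\<mu>\<in>below Rp lm. scal (c \<mu>) (monW R \<mu>))}"

definition is_basis_AW :: "'a::euclidean_space set \<Rightarrow> 'a set \<Rightarrow> ('a \<Rightarrow> ('a \<Rightarrow>\<^sub>0 real)) \<Rightarrow> bool" where
  "is_basis_AW R Rp s \<longleftrightarrow>
     (\<forall>lm\<in>dominant Rp. s lm \<in> AW R) \<and>
     (\<forall>f\<in>AW R. \<exists>S c. finite S \<and> S \<subseteq> dominant Rp \<and> f = (\<Sum>\<mu>\<in>S. scal (c \<mu>) (s \<mu>))) \<and>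
     (\<forall>S c. finite S \<longrightarrow> S \<subseteq> dominant Rp \<longrightarrow> (\<Sum>\<mu>\<in>S. scal (c \<mu>) (s \<mu>)) = 0 \<longrightarrow> (\<forall>\<mu>\<in>S. c \<mu> = 0))"

definition linear_on_AW :: "'a::euclidean_space set \<Rightarrow> (('a \<Rightarrow>\<^sub>0 real) \<Rightarrow> ('a \<Rightarrow>\<^sub>0 real)) \<Rightarrow> bool" where
  "linear_on_AW R D \<longleftrightarrow> D ` AW R \<subseteq> AW R \<and>
     (\<forall>f\<in>AW R. \<forall>g\<in>AW R. D (f + g) = D f + D g) \<and>
     (\<forall>c. \<forall>f\<in>AW R. D (scal c f) = scal c (D f))"

text \<open>The lower Hessenberg matrix M (0-based indices: row i is row i+1, column j is column j+1).\<close>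
definition hess_matrix :: "'a::euclidean_space set \<Rightarrow> nat \<Rightarrow> (nat \<Rightarrow> 'a) \<Rightarrow> 'a \<Rightarrow>
     ('a \<Rightarrow> real) \<Rightarrow> ('a \<Rightarrow> 'a \<Rightarrow> real) \<Rightarrow> ('a \<Rightarrow> 'a \<Rightarrow> real) \<Rightarrow> ('a \<Rightarrow>\<^sub>0 real) mat" where
  "hess_matrix R n lam lm \<epsilon> a b = mat n n (\<lambda>(i, j).
      if j = 0 then monW R (lam (i + 1))
      else if i + 1 < j then 0
      else if i + 1 = j then gcst (\<epsilon> (lam j) - \<epsilon> lm)
      else gcst (b (lam (i + 1)) (lam j) - \<epsilon> lm * a (lam (i + 1)) (lam j)))"

end

theory Submission
  imports Defs
begin

text \<open>
  Expanding det M along its first column gives det M = \<Sum>k. C k * m(\<lambda>(k)) with real cofactors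
  C k, which only depend on the remaining columns, i.e. on the coefficients d. By the alien
  cofactor expansion C is orthogonal to each of these columns, and for the last index
  \<lambda>(n) = \<lambda> the column of d vanishes by triangularity; so D(det M) and \<epsilon>(\<lambda>) det M have the
  same coefficients in the basis s. The cofactor of m(\<lambda>) is, up to sign, the determinant of a
  triangular minor with diagonal \<epsilon>(\<lambda>(k)) - \<epsilon>(\<lambda>), hence equals E(\<lambda>), which is nonzero by
  regularity; so p(\<lambda>) is monic.
\<close>

lemma scal_lookup: "Poly_Mapping.lookup (scal c f) x = c * Poly_Mapping.lookup f x"
  unfolding scal_def gcst_def mult_map_scale_conv_mult[symmetric]
  by transfer (simp add: when_def)

lemma scal_add_right: "scal c (f + g) = scal c f + scal c g"
  by (simp add: scal_def distrib_left)

lemma scal_add_left: "scal (c + d) f = scal c f + scal d f"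
  by (simp add: scal_def gcst_def distrib_right single_add)

lemma scal_scal: "scal c (scal d f) = scal (c * d) f"
  by (simp add: scal_def gcst_def mult.assoc[symmetric] mult_single)

lemma scal_zero [simp]: "scal 0 f = 0"
  by (simp add: scal_def gcst_def)

lemma scal_one [simp]: "scal 1 f = f"
  by (simp add: scal_def gcst_def one_poly_mapping_def[symmetric])

lemma scal_sum_right: "scal c (sum f I) = (\<Sum>i\<in>I. scal c (f i))"
  by (simp add: scal_def sum_distrib_left)

lemma scal_sum_left: "scal (sum f I) g = (\<Sum>i\<in>I. scal (f i) g)"
  by (induction I rule: infinite_finite_induct) (auto simp: scal_add_left)

lemma gcst_comm_ring_hom: "comm_ring_hom gcst"
  by unfold_locales (auto simp: gcst_def mult_single one_poly_mapping_def single_add)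

lemma AW_zero: "0 \<in> AW R"
  unfolding AW_def by auto

lemma AW_add: "f \<in> AW R \<Longrightarrow> g \<in> AW R \<Longrightarrow> f + g \<in> AW R"
  unfolding AW_def using keys_add[of f g] by (auto simp: lookup_add)

lemma AW_scal:
  assumes "f \<in> AW R"
  shows "scal c f \<in> AW R"
proof -
  have "Poly_Mapping.keys (scal c f) \<subseteq> Poly_Mapping.keys f"
    by (auto simp: scal_lookup in_keys_iff)
  with assms show ?thesis
    unfolding AW_def by (auto simp: scal_lookup)
qed

lemma AW_sum: "(\<And>i. i \<in> I \<Longrightarrow> f i \<in> AW R) \<Longrightarrow> sum f I \<in> AW R"
  by (induction I rule: infinite_finite_induct) (auto simp: AW_zero AW_add)

lemma monW_in_AW:
  assumes "is_basis_AW R Rp s" and "\<nu> \<in> dominant Rp"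
    and "monW R \<nu> = (\<Sum>\<mu>\<in>below Rp \<nu>. scal (a \<mu>) (s \<mu>))"
  shows "monW R \<nu> \<in> AW R"
  using assms unfolding is_basis_AW_def below_def by (auto intro!: AW_sum AW_scal)

lemma linear_on_AW_zero: "linear_on_AW R D \<Longrightarrow> D 0 = 0"
  unfolding linear_on_AW_def using AW_zero[of R] by (metis scal_zero)

lemma linear_on_AW_scal_sum:
  assumes lin: "linear_on_AW R D" and AW: "\<And>i. i \<in> I \<Longrightarrow> f i \<in> AW R"
  shows "D (\<Sum>i\<in>I. scal (c i) (f i)) = (\<Sum>i\<in>I. scal (c i) (D (f i)))"
  using AW
proof (induction I rule: infinite_finite_induct)
  case (insert x F)
  have "(\<Sum>i\<in>F. scal (c i) (f i)) \<in> AW R" and "scal (c x) (f x) \<in> AW R"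
    using insert by (auto intro!: AW_sum AW_scal)
  with insert lin show ?case
    unfolding linear_on_AW_def by simp
qed (use linear_on_AW_zero[OF lin] in simp_all)

lemma linear_on_AW_eigen_combination:
  fixes m :: "'i \<Rightarrow> ('a::euclidean_space \<Rightarrow>\<^sub>0 real)"
  assumes lin: "linear_on_AW R D"
    and m_AW: "\<And>i. i \<in> I \<Longrightarrow> m i \<in> AW R"
    and m_exp: "\<And>i. i \<in> I \<Longrightarrow> m i = (\<Sum>\<mu>\<in>B. scal (a i \<mu>) (s \<mu>))"
    and Dm_exp: "\<And>i. i \<in> I \<Longrightarrow> D (m i) = (\<Sum>\<mu>\<in>B. scal (b i \<mu>) (s \<mu>))"
    and kernel: "\<And>\<mu>. \<mu> \<in> B \<Longrightarrow> (\<Sum>i\<in>I. c i * (b i \<mu> - e * a i \<mu>)) = 0"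
  shows "D (\<Sum>i\<in>I. scal (c i) (m i)) = scal e (\<Sum>i\<in>I. scal (c i) (m i))"
proof -
  have coeff: "(\<Sum>i\<in>I. c i * b i \<mu>) = (\<Sum>i\<in>I. e * (c i * a i \<mu>))" if "\<mu> \<in> B" for \<mu>
    using kernel[OF that] by (simp add: algebra_simps sum_subtractf sum_distrib_left)
  have "D (\<Sum>i\<in>I. scal (c i) (m i)) = (\<Sum>i\<in>I. scal (c i) (D (m i)))"
    by (rule linear_on_AW_scal_sum[OF lin m_AW])
  also have "\<dots> = (\<Sum>i\<in>I. \<Sum>\<mu>\<in>B. scal (c i * b i \<mu>) (s \<mu>))"
    by (intro sum.cong refl) (simp add: Dm_exp scal_sum_right scal_scal)
  also have "\<dots> = (\<Sum>\<mu>\<in>B. scal (\<Sum>i\<in>I. c i * b i \<mu>) (s \<mu>))"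
    by (subst sum.swap) (simp add: scal_sum_left)
  also have "\<dots> = (\<Sum>\<mu>\<in>B. scal (\<Sum>i\<in>I. e * (c i * a i \<mu>)) (s \<mu>))"
    using coeff by simp
  also have "\<dots> = (\<Sum>i\<in>I. \<Sum>\<mu>\<in>B. scal (e * (c i * a i \<mu>)) (s \<mu>))"
    by (subst sum.swap) (simp add: scal_sum_left)
  also have "\<dots> = (\<Sum>i\<in>I. scal e (scal (c i) (m i)))"
    by (intro sum.cong refl) (simp add: m_exp scal_sum_right scal_scal mult.assoc)
  also have "\<dots> = scal e (\<Sum>i\<in>I. scal (c i) (m i))"
    by (simp add: scal_sum_right)
  finally show ?thesis .
qed

lemma dom_le_refl: "dom_le Rp x x"
  unfolding dom_le_def Qplus_def by (auto intro: exI[of _ "\<lambda>_. 0"])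

lemma dom_le_trans:
  assumes "dom_le Rp x y" and "dom_le Rp y z"
  shows "dom_le Rp x z"
proof -
  obtain k l where "y - x = (\<Sum>\<alpha>\<in>Rp. real (k \<alpha>) *\<^sub>R \<alpha>)" and "z - y = (\<Sum>\<alpha>\<in>Rp. real (l \<alpha>) *\<^sub>R \<alpha>)"
    using assms unfolding dom_le_def Qplus_def by auto
  then have "z - x = (\<Sum>\<alpha>\<in>Rp. real (k \<alpha> + l \<alpha>) *\<^sub>R \<alpha>)"
    by (simp add: scaleR_add_left sum.distrib algebra_simps)
  then show ?thesis
    unfolding dom_le_def Qplus_def mem_Collect_eq
    by (rule exI[of _ "\<lambda>\<alpha>. k \<alpha> + l \<alpha>"])
qed

lemma (in comm_ring_hom) laplace_first_column_hom:
  assumes N: "N \<in> carrier_mat n n" and A: "A \<in> carrier_mat n n" and "0 < n"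
    and off_first: "\<And>i j. i < n \<Longrightarrow> j < n \<Longrightarrow> 0 < j \<Longrightarrow> N $$ (i, j) = hom (A $$ (i, j))"
  shows "det N = (\<Sum>i<n. N $$ (i, 0) * hom (cofactor A i 0))"
proof -
  have "cofactor N i 0 = hom (cofactor A i 0)" if "i < n" for i
  proof -
    have "mat_delete N i 0 = map_mat hom (mat_delete A i 0)"
      using N A off_first unfolding mat_delete_def by (intro eq_matI) auto
    then show ?thesis
      unfolding cofactor_def by (simp add: hom_distribs)
  qed
  then show ?thesis
    using laplace_expansion_column[OF N \<open>0 < n\<close>] by simp
qed

lemma first_column_cofactors_orthogonal:
  fixes A :: "'a::comm_ring_1 mat"
  assumes A: "A \<in> carrier_mat n n" and "0 < j" "j < n"
  shows "(\<Sum>i<n. cofactor A i 0 * A $$ (i, j)) = 0"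
proof -
  have "(\<Sum>i<n. cofactor A i 0 * A $$ (i, j)) = (adj_mat A * A) $$ (0, j)"
    using assms unfolding times_mat_def scalar_prod_def adj_mat_def
    by (auto intro: sum.cong simp: mult.commute)
  also have "\<dots> = 0"
    using adj_mat(3)[OF A] assms by simp
  finally show ?thesis .
qed

lemma cofactor_last_row_first_col_hessenberg:
  fixes A :: "'a::comm_ring_1 mat"
  assumes A: "A \<in> carrier_mat n n"
    and hess: "\<And>i j. i + 1 < j \<Longrightarrow> j < n \<Longrightarrow> A $$ (i, j) = 0"
  shows "cofactor A (n - 1) 0 = (-1) ^ (n - 1) * (\<Prod>k<n - 1. A $$ (k, k + 1))"
proof -
  have "det (mat_delete A (n - 1) 0) = prod_list (diag_mat (mat_delete A (n - 1) 0))"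
    using A hess mat_delete_carrier[OF A]
    by (intro det_lower_triangular[of "n - 1"]) (auto simp: mat_delete_def)
  also have "\<dots> = (\<Prod>k<n - 1. A $$ (k, k + 1))"
    using A unfolding diag_mat_def prod.list_conv_set_nth
    by (intro prod.cong) (auto simp: mat_delete_def)
  finally show ?thesis
    unfolding cofactor_def by simp
qed

locale refining_enumeration =
  fixes Rp :: "'a::euclidean_space set" and lm :: 'a and n :: nat and lam :: "nat \<Rightarrow> 'a"
  assumes lm_dominant: "lm \<in> dominant Rp"
    and bij: "bij_betw lam {1..n} (below Rp lm)"
    and lam_last: "lam n = lm"
    and refines: "\<forall>i\<in>{1..n}. \<forall>j\<in>{1..n}. dom_lt Rp (lam i) (lam j) \<longrightarrow> i < j"
begin

lemma inj_lam: "inj_on lam {1..n}" and lam_image: "lam ` {1..n} = below Rp lm"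
  using bij unfolding bij_betw_def by auto

lemma n_pos: "0 < n"
  using lam_image lm_dominant dom_le_refl unfolding below_def by fastforce

lemma finite_below: "finite (below Rp lm)"
  using lam_image finite_atLeastAtMost finite_imageI by metis

lemma lam_dominant: "k \<in> {1..n} \<Longrightarrow> lam k \<in> dominant Rp"
  using lam_image unfolding below_def by blast

lemma below_lam_subset: "k \<in> {1..n} \<Longrightarrow> below Rp (lam k) \<subseteq> below Rp lm"
  using lam_image dom_le_trans unfolding below_def by blast

lemma later_not_below:
  assumes "i \<in> {1..n}" "j \<in> {1..n}" "i < j"
  shows "lam j \<notin> below Rp (lam i)"
proof
  assume "lam j \<in> below Rp (lam i)"
  moreover have "lam j \<noteq> lam i"
    using inj_lam assms by (metis inj_on_eq_iff less_irrefl)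
  ultimately have "dom_lt Rp (lam j) (lam i)"
    unfolding below_def dom_lt_def by auto
  then show False
    using refines assms by fastforce
qed

lemma coeff_later_zero:
  assumes "\<forall>\<nu>\<in>dominant Rp. \<forall>\<mu>. \<mu> \<notin> below Rp \<nu> \<longrightarrow> f \<nu> \<mu> = 0"
    and "1 \<le> i" "i < j" "j \<le> n"
  shows "f (lam i) (lam j) = 0"
  using assms later_not_below lam_dominant by simp

lemma sum_below_lam_eq:
  assumes "k \<in> {1..n}" and "\<And>\<mu>. \<mu> \<notin> below Rp (lam k) \<Longrightarrow> g \<mu> = 0"
  shows "(\<Sum>\<mu>\<in>below Rp (lam k). g \<mu>) = (\<Sum>\<mu>\<in>below Rp lm. g \<mu>)"
  using assms below_lam_subset finite_below by (intro sum.mono_neutral_left) auto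

lemma strictly_below_eq: "strictly_below Rp lm = lam ` {1..<n}"
proof -
  have "lam ` ({1..n} - {n}) = below Rp lm - {lm}"
    using inj_on_image_set_diff[OF inj_lam, of "{1..n}" "{n}"] lam_image lam_last n_pos by simp
  moreover have "{1..n} - {n} = {1..<n}"
    by auto
  ultimately show ?thesis
    unfolding strictly_below_def below_def dom_lt_def by auto
qed

lemma sum_split_last:
  "(\<Sum>i<n. g i (lam (i + 1))) =
     g (n - 1) lm + (\<Sum>\<mu>\<in>strictly_below Rp lm. g (inv_into {1..n} lam \<mu> - 1) \<mu>)"
proof -
  have inj_init: "inj_on lam {1..<n}"
    using inj_lam by (rule inj_on_subset) auto
  have "(\<Sum>i<n. g i (lam (i + 1))) = (\<Sum>k\<in>{1..n}. g (k - 1) (lam k))"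
    by (simp add: sum.atLeast1_atMost_eq)
  also have "\<dots> = g (n - 1) lm + (\<Sum>k\<in>{1..<n}. g (k - 1) (lam k))"
    using n_pos lam_last
    by (simp add: atLeastLessThanSuc_atLeastAtMost[symmetric] add.commute flip: Suc_pred')
  also have "(\<Sum>k\<in>{1..<n}. g (k - 1) (lam k)) =
      (\<Sum>\<mu>\<in>strictly_below Rp lm. g (inv_into {1..n} lam \<mu> - 1) \<mu>)"
    unfolding strictly_below_eq sum.reindex[OF inj_init] using inj_lam by (intro sum.cong) auto
  finally show ?thesis .
qed

end

text \<open>
  The first column is junk: only
  cofactors along it are used. Under triangularity of a and b, hess_matrix is the image of this
  matrix under gcst off its first column.
\<close>
definition hess_coeff_matrix ::
    "nat \<Rightarrow> (nat \<Rightarrow> 'a) \<Rightarrow> 'a \<Rightarrow> ('a \<Rightarrow> real) \<Rightarrow> ('a \<Rightarrow> 'a \<Rightarrow> real) \<Rightarrow> ('a \<Rightarrow> 'a \<Rightarrow> real) \<Rightarrow>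
     real mat" where
  "hess_coeff_matrix n lam lm \<epsilon> a b =
     mat n n (\<lambda>(i, j). b (lam (i + 1)) (lam j) - \<epsilon> lm * a (lam (i + 1)) (lam j))"

locale hessenberg_coeffs =
  fixes n :: nat and lam :: "nat \<Rightarrow> 'a::euclidean_space" and lm :: 'a
    and \<epsilon> :: "'a \<Rightarrow> real" and a b :: "'a \<Rightarrow> 'a \<Rightarrow> real"
  assumes upper: "\<And>k j. 1 \<le> k \<Longrightarrow> k < j \<Longrightarrow> j \<le> n \<Longrightarrow>
      a (lam k) (lam j) = 0 \<and> b (lam k) (lam j) = 0"
    and diag: "\<And>k. 1 \<le> k \<Longrightarrow> k \<le> n \<Longrightarrow>
      a (lam k) (lam k) = 1 \<and> b (lam k) (lam k) = \<epsilon> (lam k)"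
begin

lemma det_hess_matrix_expansion:
  assumes "0 < n"
  shows "det (hess_matrix R n lam lm \<epsilon> a b) =
    (\<Sum>i<n. scal (cofactor (hess_coeff_matrix n lam lm \<epsilon> a b) i 0) (monW R (lam (i + 1))))"
proof -
  interpret gcst: comm_ring_hom gcst
    by (rule gcst_comm_ring_hom)
  let ?M = "hess_matrix R n lam lm \<epsilon> a b" and ?A = "hess_coeff_matrix n lam lm \<epsilon> a b"
  have "?M $$ (i, j) = gcst (?A $$ (i, j))" if "i < n" "j < n" "0 < j" for i j
    using that upper[of "i + 1" j] diag[of j]
    by (auto simp: hess_matrix_def hess_coeff_matrix_def)
  then have "det ?M = (\<Sum>i<n. ?M $$ (i, 0) * gcst (cofactor ?A i 0))"
    using assms
    by (intro gcst.laplace_first_column_hom) (auto simp: hess_matrix_def hess_coeff_matrix_def)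
  also have "\<dots> = (\<Sum>i<n. scal (cofactor ?A i 0) (monW R (lam (i + 1))))"
    by (intro sum.cong refl) (simp add: hess_matrix_def scal_def mult.commute)
  finally show ?thesis .
qed

lemma hess_coeff_cofactor_last:
  assumes "0 < n"
  shows "cofactor (hess_coeff_matrix n lam lm \<epsilon> a b) (n - 1) 0 =
    (\<Prod>k\<in>{1..<n}. \<epsilon> lm - \<epsilon> (lam k))"
proof -
  have "cofactor (hess_coeff_matrix n lam lm \<epsilon> a b) (n - 1) 0 =
      (-1) ^ (n - 1) * (\<Prod>k<n - 1. \<epsilon> (lam (k + 1)) - \<epsilon> lm)"
    using upper diag
    by (subst cofactor_last_row_first_col_hessenberg) (auto simp: hess_coeff_matrix_def)
  also have "\<dots> = (\<Prod>k<n - 1. (-1) * (\<epsilon> (lam (k + 1)) - \<epsilon> lm))"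
    by (simp only: prod.distrib prod_constant card_lessThan)
  also have "\<dots> = (\<Prod>k\<in>{1..<n}. \<epsilon> lm - \<epsilon> (lam k))"
    using assms prod.shift_bounds_Suc_ivl[of "\<lambda>k. \<epsilon> lm - \<epsilon> (lam k)" 0 "n - 1"]
    by (simp add: lessThan_atLeast0)
  finally show ?thesis .
qed

lemma hess_coeff_cofactors_kernel:
  assumes "lam n = lm" and "1 \<le> j" "j \<le> n"
  shows "(\<Sum>i<n. cofactor (hess_coeff_matrix n lam lm \<epsilon> a b) i 0 *
           (b (lam (i + 1)) (lam j) - \<epsilon> lm * a (lam (i + 1)) (lam j))) = 0"
proof (cases "j < n")
  case True
  then show ?thesis
    using first_column_cofactors_orthogonal[of "hess_coeff_matrix n lam lm \<epsilon> a b" n j] assms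
    by (simp add: hess_coeff_matrix_def)
next
  case False
  then have "j = n"
    using assms by simp
  have "b (lam (i + 1)) (lam n) - \<epsilon> lm * a (lam (i + 1)) (lam n) = 0" if "i < n" for i
    using that upper[of "i + 1" n] diag[of n] assms(1) by (cases "i + 1 = n") auto
  with \<open>j = n\<close> show ?thesis
    by simp
qed

end

locale triangular_expansion = refining_enumeration Rp lm n lam
  for Rp :: "'a::euclidean_space set" and lm n lam +
  fixes R :: "'a set" and D :: "('a \<Rightarrow>\<^sub>0 real) \<Rightarrow> ('a \<Rightarrow>\<^sub>0 real)"
    and s :: "'a \<Rightarrow> ('a \<Rightarrow>\<^sub>0 real)"
    and a b :: "'a \<Rightarrow> 'a \<Rightarrow> real" and \<epsilon> :: "'a \<Rightarrow> real"
  assumes lin: "linear_on_AW R D"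
    and basis: "is_basis_AW R Rp s"
    and a_exp: "\<forall>\<nu>\<in>dominant Rp. monW R \<nu> = (\<Sum>\<mu>\<in>below Rp \<nu>. scal (a \<nu> \<mu>) (s \<mu>)) \<and> a \<nu> \<nu> = 1"
    and b_exp: "\<forall>\<nu>\<in>dominant Rp. D (monW R \<nu>) = (\<Sum>\<mu>\<in>below Rp \<nu>. scal (b \<nu> \<mu>) (s \<mu>)) \<and> b \<nu> \<nu> = \<epsilon> \<nu>"
    and ab_zero: "\<forall>\<nu>\<in>dominant Rp. \<forall>\<mu>. \<mu> \<notin> below Rp \<nu> \<longrightarrow> a \<nu> \<mu> = 0 \<and> b \<nu> \<mu> = 0"

sublocale triangular_expansion \<subseteq> hessenberg_coeffs n lam lm \<epsilon> a b
proof
  show "a (lam k) (lam j) = 0 \<and> b (lam k) (lam j) = 0" if "1 \<le> k" "k < j" "j \<le> n" for k j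
    using that ab_zero coeff_later_zero[of a] coeff_later_zero[of b] by blast
  show "a (lam k) (lam k) = 1 \<and> b (lam k) (lam k) = \<epsilon> (lam k)" if "1 \<le> k" "k \<le> n" for k
    using that a_exp b_exp lam_dominant by simp
qed

context triangular_expansion
begin

lemma monW_lam_in_AW: "k \<in> {1..n} \<Longrightarrow> monW R (lam k) \<in> AW R"
  using basis a_exp lam_dominant monW_in_AW by blast

lemma monW_lam_expansion:
  assumes "k \<in> {1..n}"
  shows "monW R (lam k) = (\<Sum>\<mu>\<in>below Rp lm. scal (a (lam k) \<mu>) (s \<mu>))"
    and "D (monW R (lam k)) = (\<Sum>\<mu>\<in>below Rp lm. scal (b (lam k) \<mu>) (s \<mu>))"
  using a_exp b_exp ab_zero lam_dominant[OF assms]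
  by (auto intro!: sum_below_lam_eq[OF assms])

lemma det_hess_matrix_in_AW: "det (hess_matrix R n lam lm \<epsilon> a b) \<in> AW R"
  unfolding det_hess_matrix_expansion[OF n_pos] by (auto intro!: AW_sum AW_scal monW_lam_in_AW)

lemma D_det_hess_matrix:
  "D (det (hess_matrix R n lam lm \<epsilon> a b)) = scal (\<epsilon> lm) (det (hess_matrix R n lam lm \<epsilon> a b))"
  unfolding det_hess_matrix_expansion[OF n_pos]
proof (rule linear_on_AW_eigen_combination[OF lin])
  fix i assume "i \<in> {..<n}"
  then have k: "i + 1 \<in> {1..n}"
    by simp
  show "monW R (lam (i + 1)) \<in> AW R"
    by (rule monW_lam_in_AW[OF k])
  show "monW R (lam (i + 1)) = (\<Sum>\<mu>\<in>below Rp lm. scal (a (lam (i + 1)) \<mu>) (s \<mu>))"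
    and "D (monW R (lam (i + 1))) = (\<Sum>\<mu>\<in>below Rp lm. scal (b (lam (i + 1)) \<mu>) (s \<mu>))"
    by (rule monW_lam_expansion[OF k])+
next
  fix \<mu> assume "\<mu> \<in> below Rp lm"
  then obtain j where "j \<in> {1..n}" "\<mu> = lam j"
    using lam_image by blast
  then show "(\<Sum>i<n. cofactor (hess_coeff_matrix n lam lm \<epsilon> a b) i 0 *
      (b (lam (i + 1)) \<mu> - \<epsilon> lm * a (lam (i + 1)) \<mu>)) = 0"
    using hess_coeff_cofactors_kernel lam_last by simp
qed

lemma det_hess_matrix_leading_term:
  "\<exists>c. det (hess_matrix R n lam lm \<epsilon> a b) =
     scal (\<Prod>\<mu>\<in>strictly_below Rp lm. \<epsilon> lm - \<epsilon> \<mu>) (monW R lm) +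
     (\<Sum>\<mu>\<in>strictly_below Rp lm. scal (c \<mu>) (monW R \<mu>))"
proof -
  define C where "C i = cofactor (hess_coeff_matrix n lam lm \<epsilon> a b) i 0" for i
  have inj_init: "inj_on lam {1..<n}"
    using inj_lam by (rule inj_on_subset) auto
  have "C (n - 1) = (\<Prod>\<mu>\<in>strictly_below Rp lm. \<epsilon> lm - \<epsilon> \<mu>)"
    unfolding C_def hess_coeff_cofactor_last[OF n_pos] strictly_below_eq prod.reindex[OF inj_init]
    by simp
  then show ?thesis
    unfolding det_hess_matrix_expansion[OF n_pos] C_def[symmetric]
      sum_split_last[of "\<lambda>i \<mu>. scal (C i) (monW R \<mu>)"]
    by (auto intro!: exI[of _ "\<lambda>\<mu>. C (inv_into {1..n} lam \<mu> - 1)"])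
qed

end

theorem mainTheorem1:
  fixes R Rp :: "'a::euclidean_space set"
    and D :: "('a \<Rightarrow>\<^sub>0 real) \<Rightarrow> ('a \<Rightarrow>\<^sub>0 real)"
    and s :: "'a \<Rightarrow> ('a \<Rightarrow>\<^sub>0 real)"
    and a b :: "'a \<Rightarrow> 'a \<Rightarrow> real" and \<epsilon> :: "'a \<Rightarrow> real"
    and lm :: 'a and n :: nat and lam :: "nat \<Rightarrow> 'a"
  assumes rs: "root_system R" and irr: "irreducible_rs R" and pos: "positive_system R Rp"
    and lin: "linear_on_AW R D"
    and tri: "\<forall>\<nu>\<in>dominant Rp. D ` AWl R Rp \<nu> \<subseteq> AWl R Rp \<nu>"
    and basis: "is_basis_AW R Rp s"
    and a_exp: "\<forall>\<nu>\<in>dominant Rp. monW R \<nu> = (\<Sum>\<mu>\<in>below Rp \<nu>. scal (a \<nu> \<mu>) (s \<mu>)) \<and> a \<nu> \<nu> = 1"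
    and b_exp: "\<forall>\<nu>\<in>dominant Rp. D (monW R \<nu>) = (\<Sum>\<mu>\<in>below Rp \<nu>. scal (b \<nu> \<mu>) (s \<mu>)) \<and> b \<nu> \<nu> = \<epsilon> \<nu>"
    and ab_zero: "\<forall>\<nu>\<in>dominant Rp. \<forall>\<mu>. \<mu> \<notin> below Rp \<nu> \<longrightarrow> a \<nu> \<mu> = 0 \<and> b \<nu> \<mu> = 0"
    and regular: "\<forall>\<mu>\<in>dominant Rp. \<forall>\<nu>\<in>dominant Rp. dom_lt Rp \<mu> \<nu> \<longrightarrow> \<epsilon> \<mu> \<noteq> \<epsilon> \<nu>"
    and lam_dom: "lm \<in> dominant Rp"
    and n_def: "n = card (below Rp lm)"
    and enum: "bij_betw lam {1..n} (below Rp lm)"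
    and enum_last: "lam n = lm"
    and enum_refines: "\<forall>i\<in>{1..n}. \<forall>j\<in>{1..n}. dom_lt Rp (lam i) (lam j) \<longrightarrow> i < j"
  shows "let E = (\<Prod>\<mu>\<in>strictly_below Rp lm. \<epsilon> lm - \<epsilon> \<mu>);
             p = scal (1 / E) (det (hess_matrix R n lam lm \<epsilon> a b))
         in D p = scal (\<epsilon> lm) p \<and>
            (\<exists>c. p = monW R lm + (\<Sum>\<mu>\<in>strictly_below Rp lm. scal (c \<mu>) (monW R \<mu>)))"
proof -
  interpret triangular_expansion Rp lm n lam R D s a b \<epsilon>
    using lam_dom enum enum_last enum_refines lin basis a_exp b_exp ab_zero by unfold_locales
  define E where "E = (\<Prod>\<mu>\<in>strictly_below Rp lm. \<epsilon> lm - \<epsilon> \<mu>)"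
  define M where "M = det (hess_matrix R n lam lm \<epsilon> a b)"
  have "finite (strictly_below Rp lm)"
    by (simp add: strictly_below_eq)
  moreover have "\<epsilon> lm \<noteq> \<epsilon> \<mu>" if "\<mu> \<in> strictly_below Rp lm" for \<mu>
    using that regular lm_dominant unfolding strictly_below_def by fastforce
  ultimately have "E \<noteq> 0"
    unfolding E_def by simp
  obtain c where
    M_eq: "M = scal E (monW R lm) + (\<Sum>\<mu>\<in>strictly_below Rp lm. scal (c \<mu>) (monW R \<mu>))"
    using det_hess_matrix_leading_term unfolding M_def E_def by blast
  have "D (scal (1 / E) M) = scal (\<epsilon> lm) (scal (1 / E) M)"
    using lin det_hess_matrix_in_AW D_det_hess_matrix
    unfolding M_def linear_on_AW_def by (simp add: scal_scal mult.commute)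
  moreover have
    "scal (1 / E) M = monW R lm + (\<Sum>\<mu>\<in>strictly_below Rp lm. scal (c \<mu> / E) (monW R \<mu>))"
    unfolding M_eq using \<open>E \<noteq> 0\<close> by (simp add: scal_add_right scal_sum_right scal_scal)
  ultimately show ?thesis
    unfolding Let_def E_def[symmetric] M_def[symmetric]
    by (auto intro!: exI[of _ "\<lambda>\<mu>. c \<mu> / E"])
qed

end
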